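(* Let $G$ be a compact matrix quantum group with fundamental matrix $u=(u_{ij})_{1\le i,j\le N}$ and let $p\in\mathcal P(\omega,\omega')$ be a two-coloured partition. Then: (1) if the relations $R^{Gr}_p(u)$, $R^{Gr}_{pp^*}(u)$ and $R^{Gr}_{p^*}(u)$ hold, then $R^{Sp}_p(u)$ holds; (2) if $R^{Sp}_p(u)$ and $R^{Sp}_p(u^T)$ hold, then $R^{Gr}_p(u)$ holds. In particular, if $G=G_N(\Pi)$ for a set $\Pi$ of two-coloured partitions containing the four mixed-coloured pair partitions and $p$ belongs to the category $\langle\Pi\rangle$, then $R^{Gr}_p(u)$ holds if and only if both $R^{Sp}_p(u)$ and $R^{Sp}_p(u^T)$ hold.
   Context: $[n]:=\{1,\dots,n\}$; $[N]^0=\{\epsilon\}$. A two-coloured partition on $k$ upper and $l$ lower points is a partition of the $k$ upper and $l$ lower points (each row ordered left to right) into non-empty disjoint blocks, each point coloured $1$ or $*$; $\mathcal P(\omega,\omega')$ denotes those with upper colour word $\omega\in\{1,*\}^k$, lower colour word $\omega'\in\{1,*\}^l$. Through-blocks contain upper and lower points; $tb(p)$ is their number. A row labeling is valid if points of that row in a common block carry equal labels; $\epsilon$ is valid. Decomposition of labelings of $p$: $T_0$/$T'_0$ = invalid upper/lower row labelings; $r=N^{tb(p)}$; enumerate assignments of labels in $[N]$ to through-blocks as $1,\dots,r$; $T_i$/$T'_i$ = valid upper/lower row labelings giving each through-block the label of the $i$-th assignment. $a^1:=a$; empty products equal $\mathbb 1$. Operations: $p^*\in\mathcal P(\omega',\omega)$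 is $p$ reflected so that upper and lower rows are exchanged (colours kept). For $p\in\mathcal P(\omega_1,\omega_2)$ and $q\in\mathcal P(\omega_2,\omega_3)$ the composition $qp\in\mathcal P(\omega_1,\omega_3)$ is obtained by identifying the lower points of $p$ with the upper points of $q$ and taking as blocks the connected components restricted to the upper points of $p$ and lower points of $q$ (components meeting neither are discarded); thus $pp^*\in\mathcal P(\omega',\omega')$. The tensor product places partitions side by side. A category of partitions is a set closed under tensor product, composition and involution and containing the identity partitions (one upper and one lower point of equal colour forming a block) and the four mixed-coloured pair partitions (single blocks of two oppositely coloured points both in the upper row, or both in the lower row); $\langle\Pi\rangle$ is the category generated by $\Pi$. A compact matrix quantum group $G$ is a unital $C^*$-algebra $C(G)$ generated by the entries of an $N\times N$ matrix $u=(u_{ij})$ such that $u$ and $\bar u=(u_{ij}^* )$ are invertible and there is a $*$-homomorphism $\Delta:C(G)\to C(G)\otimes C(G)$ with $\Delta(u_{ij})=\sum_k u_{ik}\otimes u_{kj}$. Relations $R^{Gr}_p(u)$: (i) $\sum_{t\in T_i}u_{t_1\gamma_1}^{\omega_1}\cdots u_{t_k\gamma_k}^{\omega_k}=\sum_{t'\in T'_j}u_{\gamma'_1t'_1}^{\omega'_1}\cdots u_{\gamma'_lt'_l}^{\omega'_l}$ for $1\le i,j\le r$, $\gamma\in T_j$, $\gamma'\in T'_i$; (ii) $\sum_{t\in T_i}u_{t_1\gamma_1}^{\omega_1}\cdots u_{t_k\gamma_k}^{\omega_k}=0$ for $\gamma\in T_0$; (iii) $\sum_{t'\in T'_j}u_{\gamma'_1t'_1}^{\omega'_1}\cdots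 u_{\gamma'_lt'_l}^{\omega'_l}=0$ for $\gamma'\in T'_0$. Relations $R^{Sp}_p(y)$ for a family $y=(y_{ij})_{i\in[N],j\in[d]}$ ($d\le N$): (i) $\sum_{t\in T_i}y_{t_1\gamma_1}^{\omega_1}\cdots y_{t_k\gamma_k}^{\omega_k}=\sum_{t'\in T'_i}y_{t'_1\gamma'_1}^{\omega'_1}\cdots y_{t'_l\gamma'_l}^{\omega'_l}$ for $1\le i,j\le r$, $\gamma\in T_j\cap[d]^k$, $\gamma'\in T'_j\cap[d]^l$; (ii) $\sum_{t\in T_i}y_{t_1\gamma_1}^{\omega_1}\cdots y_{t_k\gamma_k}^{\omega_k}=0$ for $1\le i\le r$, $\gamma\in T_0\cap[d]^k$; (iii) $\sum_{t'\in T'_i}y_{t'_1\gamma'_1}^{\omega'_1}\cdots y_{t'_l\gamma'_l}^{\omega'_l}=0$ for $1\le i\le r$, $\gamma'\in T'_0\cap[d]^l$. Here $R^{Sp}_p(u)$ means this with $d=N$ and $y_{ij}=u_{ij}$; $R^{Sp}_p(u^T)$ means $d=N$ and $y_{ij}=u_{ji}$. $C(G_N(\Pi))$: universal unital $C^*$-algebra generated by $u_{ij}$ subject to $R^{Gr}_p(u)$, $p\in\Pi$ (easy quantum group); it is known that then $R^{Gr}_q(u)$ holds for all $q\in\langle\Pi\rangle$, and these relations also hold for $u^T$ in place of $u$. *)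

theory Defs
  imports Complex_Main "HOL-Library.FuncSet" "HOL-Library.Disjoint_Sets"
begin

section \<open>Two-coloured partitions\<close>

text \<open>Colours: C1 is the colour 1, CS is the colour *.\<close>
datatype col = C1 | CS

text \<open>Points: U i is the (i+1)-th upper point, L j the (j+1)-th lower point (0-based).\<close>
datatype pt = U nat | L nat

datatype tcpart = TCP (up: "col list") (lo: "col list") (blks: "pt set set")

definition pts :: "tcpart \<Rightarrow> pt set" where
  "pts p = U ` {..<length (up p)} \<union> L ` {..<length (lo p)}"

definition is_tcpart :: "tcpart \<Rightarrow> bool" where
  "is_tcpart p \<longleftrightarrow> partition_on (pts p) (blks p)"

definition sameblk :: "tcpart \<Rightarrow> pt \<Rightarrow> pt \<Rightarrow> bool" where
  "sameblk p x y \<longleftrightarrow> (\<exists>B\<in>blks p. x \<in> B \<and> y \<in> B)"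

fun flip_pt :: "pt \<Rightarrow> pt" where
  "flip_pt (U i) = L i" | "flip_pt (L j) = U j"

definition pinv :: "tcpart \<Rightarrow> tcpart" where
  "pinv p = TCP (lo p) (up p) ((\<lambda>B. flip_pt ` B) ` blks p)"

fun shift_pt :: "nat \<Rightarrow> nat \<Rightarrow> pt \<Rightarrow> pt" where
  "shift_pt a b (U i) = U (i + a)" | "shift_pt a b (L j) = L (j + b)"

definition ptens :: "tcpart \<Rightarrow> tcpart \<Rightarrow> tcpart" where
  "ptens p q = TCP (up p @ up q) (lo p @ lo q)
     (blks p \<union> (\<lambda>B. shift_pt (length (up p)) (length (lo p)) ` B) ` blks q)"

text \<open>Three rows used for composition: top (upper row of p), middle (lower row of p =
  upper row of q), bottom (lower row of q).\<close>
datatype pt3 = Tp nat | Md nat | Bt nat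

fun emb_top :: "pt \<Rightarrow> pt3" where
  "emb_top (U i) = Tp i" | "emb_top (L j) = Md j"

fun emb_bot :: "pt \<Rightarrow> pt3" where
  "emb_bot (U j) = Md j" | "emb_bot (L m) = Bt m"

definition cedges :: "tcpart \<Rightarrow> tcpart \<Rightarrow> (pt3 \<times> pt3) set" where
  "cedges q p = {(emb_top x, emb_top y) | x y. sameblk p x y}
              \<union> {(emb_bot x, emb_bot y) | x y. sameblk q x y}"

text \<open>Composition qp (p on top, q below): blocks are the connected components restricted
  to the upper points of p and lower points of q; components meeting neither are discarded.\<close>
definition pcomp :: "tcpart \<Rightarrow> tcpart \<Rightarrow> tcpart" where
  "pcomp q p = TCP (up p) (lo q)
     { {U i | i. (x, Tp i) \<in> (cedges q p)\<^sup>*} \<union> {L m | m. (x, Bt m) \<in> (cedges q p)\<^sup>*}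
       | x. x \<in> Tp ` {..<length (up p)} \<union> Bt ` {..<length (lo q)} }"

definition idpart :: "col \<Rightarrow> tcpart" where
  "idpart c = TCP [c] [c] {{U 0, L 0}}"

definition mixed_pairs :: "tcpart set" where
  "mixed_pairs = { TCP [C1, CS] [] {{U 0, U 1}}, TCP [CS, C1] [] {{U 0, U 1}},
                   TCP [] [C1, CS] {{L 0, L 1}}, TCP [] [CS, C1] {{L 0, L 1}} }"

inductive_set cat_gen :: "tcpart set \<Rightarrow> tcpart set" for Pis :: "tcpart set" where
  gen_base: "q \<in> Pis \<Longrightarrow> q \<in> cat_gen Pis"
| gen_id: "idpart c \<in> cat_gen Pis"
| gen_pair: "q \<in> mixed_pairs \<Longrightarrow> q \<in> cat_gen Pis"
| gen_tens: "q1 \<in> cat_gen Pis \<Longrightarrow> q2 \<in> cat_gen Pis \<Longrightarrow> ptens q1 q2 \<in> cat_gen Pis"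
| gen_comp: "p \<in> cat_gen Pis \<Longrightarrow> q \<in> cat_gen Pis \<Longrightarrow> lo p = up q \<Longrightarrow> pcomp q p \<in> cat_gen Pis"
| gen_inv: "q \<in> cat_gen Pis \<Longrightarrow> pinv q \<in> cat_gen Pis"

section \<open>Labelings\<close>

text \<open>[N]^k as lists of length k with entries in {1..N}.\<close>
definition labs :: "nat \<Rightarrow> nat \<Rightarrow> nat list set" where
  "labs N k = {t. length t = k \<and> set t \<subseteq> {1..N}}"

definition valid_up :: "tcpart \<Rightarrow> nat list \<Rightarrow> bool" where
  "valid_up p t \<longleftrightarrow> (\<forall>a<length t. \<forall>b<length t. sameblk p (U a) (U b) \<longrightarrow> t ! a = t ! b)"

definition valid_lo :: "tcpart \<Rightarrow> nat list \<Rightarrow> bool" where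
  "valid_lo p t \<longleftrightarrow> (\<forall>a<length t. \<forall>b<length t. sameblk p (L a) (L b) \<longrightarrow> t ! a = t ! b)"

definition tblocks :: "tcpart \<Rightarrow> pt set set" where
  "tblocks p = {B \<in> blks p. (\<exists>i. U i \<in> B) \<and> (\<exists>j. L j \<in> B)}"

text \<open>Assignments of labels in [N] to the through-blocks (the r = N^tb(p) indices).\<close>
definition assigns :: "nat \<Rightarrow> tcpart \<Rightarrow> (pt set \<Rightarrow> nat) set" where
  "assigns N p = tblocks p \<rightarrow>\<^sub>E {1..N}"

definition T0u :: "nat \<Rightarrow> tcpart \<Rightarrow> nat list set" where
  "T0u N p = {t \<in> labs N (length (up p)). \<not> valid_up p t}"

definition T0l :: "nat \<Rightarrow> tcpart \<Rightarrow> nat list set" where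
  "T0l N p = {t \<in> labs N (length (lo p)). \<not> valid_lo p t}"

definition Tu :: "nat \<Rightarrow> tcpart \<Rightarrow> (pt set \<Rightarrow> nat) \<Rightarrow> nat list set" where
  "Tu N p f = {t \<in> labs N (length (up p)). valid_up p t \<and>
                (\<forall>B\<in>tblocks p. \<forall>i<length t. U i \<in> B \<longrightarrow> t ! i = f B)}"

definition Tl :: "nat \<Rightarrow> tcpart \<Rightarrow> (pt set \<Rightarrow> nat) \<Rightarrow> nat list set" where
  "Tl N p f = {t \<in> labs N (length (lo p)). valid_lo p t \<and>
                (\<forall>B\<in>tblocks p. \<forall>i<length t. L i \<in> B \<longrightarrow> t ! i = f B)}"

section \<open>Relations\<close>

fun cpow :: "('a \<Rightarrow> 'a) \<Rightarrow> col \<Rightarrow> 'a \<Rightarrow> 'a" where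
  "cpow st C1 x = x" | "cpow st CS x = st x"

definition monom :: "('a::monoid_mult \<Rightarrow> 'a) \<Rightarrow> col list \<Rightarrow> (nat \<Rightarrow> nat \<Rightarrow> 'a)
                      \<Rightarrow> nat list \<Rightarrow> nat list \<Rightarrow> 'a" where
  "monom st w y a b = prod_list (map (\<lambda>m. cpow st (w ! m) (y (a ! m) (b ! m))) [0..<length w])"

definition RGr :: "('a::ring_1 \<Rightarrow> 'a) \<Rightarrow> nat \<Rightarrow> tcpart \<Rightarrow> (nat \<Rightarrow> nat \<Rightarrow> 'a) \<Rightarrow> bool" where
  "RGr st N p u \<longleftrightarrow>
     (\<forall>f\<in>assigns N p. \<forall>g\<in>assigns N p. \<forall>\<gamma>\<in>Tu N p g. \<forall>\<gamma>'\<in>Tl N p f.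
        (\<Sum>t\<in>Tu N p f. monom st (up p) u t \<gamma>) = (\<Sum>t'\<in>Tl N p g. monom st (lo p) u \<gamma>' t'))
   \<and> (\<forall>f\<in>assigns N p. \<forall>\<gamma>\<in>T0u N p. (\<Sum>t\<in>Tu N p f. monom st (up p) u t \<gamma>) = 0)
   \<and> (\<forall>g\<in>assigns N p. \<forall>\<gamma>'\<in>T0l N p. (\<Sum>t'\<in>Tl N p g. monom st (lo p) u \<gamma>' t') = 0)"

text \<open>R^Sp_p(y) for y = (y_ij), i in [N], j in [d].\<close>
definition RSp :: "('a::ring_1 \<Rightarrow> 'a) \<Rightarrow> nat \<Rightarrow> nat \<Rightarrow> tcpart \<Rightarrow> (nat \<Rightarrow> nat \<Rightarrow> 'a) \<Rightarrow> bool" where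
  "RSp st N d p y \<longleftrightarrow>
     (\<forall>f\<in>assigns N p. \<forall>g\<in>assigns N p.
        \<forall>\<gamma>\<in>Tu N p g \<inter> labs d (length (up p)). \<forall>\<gamma>'\<in>Tl N p g \<inter> labs d (length (lo p)).
        (\<Sum>t\<in>Tu N p f. monom st (up p) y t \<gamma>) = (\<Sum>t'\<in>Tl N p f. monom st (lo p) y t' \<gamma>'))
   \<and> (\<forall>f\<in>assigns N p. \<forall>\<gamma>\<in>T0u N p \<inter> labs d (length (up p)).
        (\<Sum>t\<in>Tu N p f. monom st (up p) y t \<gamma>) = 0)
   \<and> (\<forall>f\<in>assigns N p. \<forall>\<gamma>'\<in>T0l N p \<inter> labs d (length (lo p)).
        (\<Sum>t'\<in>Tl N p f. monom st (lo p) y t' \<gamma>') = 0)"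

section \<open>Unital C*-algebras\<close>

text \<open>A complex unital Banach algebra is encoded as a real unital Banach algebra together
  with a central element iu (the imaginary unit) with iu*iu = -1 for which the norm is
  complex-homogeneous; complex scalar multiplication is cscale.\<close>
definition cscale :: "'a::real_algebra_1 \<Rightarrow> complex \<Rightarrow> 'a \<Rightarrow> 'a" where
  "cscale iu c x = Re c *\<^sub>R x + Im c *\<^sub>R (iu * x)"

definition cstar :: "('a::{real_normed_algebra_1,banach} \<Rightarrow> 'a) \<Rightarrow> 'a \<Rightarrow> bool" where
  "cstar st iu \<longleftrightarrow>
     (\<forall>x. iu * x = x * iu) \<and> iu * iu = - 1 \<and>
     (\<forall>c x. norm (cscale iu c x) = cmod c * norm x) \<and>
     (\<forall>x. st (st x) = x) \<and> (\<forall>x y. st (x + y) = st x + st y) \<and>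
     (\<forall>x y. st (x * y) = st y * st x) \<and> (\<forall>c x. st (cscale iu c x) = cscale iu (cnj c) (st x)) \<and>
     (\<forall>x. norm (st x * x) = (norm x)\<^sup>2)"

definition star_hom :: "('a::{real_normed_algebra_1,banach} \<Rightarrow> 'a) \<Rightarrow> 'a
     \<Rightarrow> ('b::{real_normed_algebra_1,banach} \<Rightarrow> 'b) \<Rightarrow> 'b \<Rightarrow> ('a \<Rightarrow> 'b) \<Rightarrow> bool" where
  "star_hom st iu st' iu' h \<longleftrightarrow>
     (\<forall>x y. h (x + y) = h x + h y) \<and> (\<forall>x y. h (x * y) = h x * h y) \<and>
     (\<forall>c x. h (cscale iu c x) = cscale iu' c (h x)) \<and> (\<forall>x. h (st x) = st' (h x))"

definition unital_star_hom :: "('a::{real_normed_algebra_1,banach} \<Rightarrow> 'a) \<Rightarrow> 'a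
     \<Rightarrow> ('b::{real_normed_algebra_1,banach} \<Rightarrow> 'b) \<Rightarrow> 'b \<Rightarrow> ('a \<Rightarrow> 'b) \<Rightarrow> bool" where
  "unital_star_hom st iu st' iu' h \<longleftrightarrow> star_hom st iu st' iu' h \<and> h 1 = 1"

definition cstar_gen :: "('a::{real_normed_algebra_1,banach} \<Rightarrow> 'a) \<Rightarrow> 'a \<Rightarrow> 'a set \<Rightarrow> bool" where
  "cstar_gen st iu G \<longleftrightarrow>
     (\<forall>S. closed S \<and> G \<subseteq> S \<and> 1 \<in> S \<and> (\<forall>x\<in>S. \<forall>y\<in>S. x + y \<in> S \<and> x * y \<in> S) \<and>
          (\<forall>x\<in>S. st x \<in> S \<and> (\<forall>c. cscale iu c x \<in> S)) \<longrightarrow> S = UNIV)"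

text \<open>(st', iu') on 'b with i1, i2 is a C*-tensor product of the C*-algebra (st, iu) with
  itself: a C*-algebra containing commuting copies i1(A), i2(A), generated by the products
  i1 a * i2 b, such that the induced map on the algebraic tensor product is injective.\<close>
definition cstar_tensor :: "('a::{real_normed_algebra_1,banach} \<Rightarrow> 'a) \<Rightarrow> 'a
     \<Rightarrow> ('b::{real_normed_algebra_1,banach} \<Rightarrow> 'b) \<Rightarrow> 'b \<Rightarrow> ('a \<Rightarrow> 'b) \<Rightarrow> ('a \<Rightarrow> 'b) \<Rightarrow> bool" where
  "cstar_tensor st iu st' iu' i1 i2 \<longleftrightarrow>
     cstar st' iu' \<and> unital_star_hom st iu st' iu' i1 \<and> unital_star_hom st iu st' iu' i2 \<and>
     (\<forall>a b. i1 a * i2 b = i2 b * i1 a) \<and>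
     cstar_gen st' iu' {i1 a * i2 b | a b. True} \<and>
     (\<forall>(n::nat) a b. (\<forall>c. (\<Sum>k<n. cscale iu (c k) (a k)) = 0 \<longrightarrow> (\<forall>k<n. c k = 0)) \<and>
        (\<Sum>k<n. i1 (a k) * i2 (b k)) = 0 \<longrightarrow> (\<forall>k<n. b k = 0))"

definition minvertible :: "nat \<Rightarrow> (nat \<Rightarrow> nat \<Rightarrow> 'a::ring_1) \<Rightarrow> bool" where
  "minvertible N u \<longleftrightarrow> (\<exists>v. \<forall>i\<in>{1..N}. \<forall>j\<in>{1..N}.
      (\<Sum>k=1..N. u i k * v k j) = (if i = j then 1 else 0) \<and>
      (\<Sum>k=1..N. v i k * u k j) = (if i = j then 1 else 0))"

text \<open>Compact matrix quantum group: C(G) is the C*-algebra (st, iu) on 'a with fundamental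
  matrix u; the comultiplication goes into a C*-tensor product C(G) \<otimes> C(G) realised on
  some C*-algebra of type 'b.\<close>
definition cmqg :: "('a::{real_normed_algebra_1,banach} \<Rightarrow> 'a) \<Rightarrow> 'a \<Rightarrow> nat
     \<Rightarrow> (nat \<Rightarrow> nat \<Rightarrow> 'a) \<Rightarrow> 'b::{real_normed_algebra_1,banach} itself \<Rightarrow> bool" where
  "cmqg st iu N u (_::'b itself) \<longleftrightarrow>
     cstar st iu \<and>
     cstar_gen st iu {u i j | i j. i \<in> {1..N} \<and> j \<in> {1..N}} \<and>
     minvertible N u \<and> minvertible N (\<lambda>i j. st (u i j)) \<and>
     (\<exists>(st'::'b \<Rightarrow> 'b) iu' i1 i2 \<Delta>. cstar_tensor st iu st' iu' i1 i2 \<and>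
        star_hom st iu st' iu' \<Delta> \<and>
        (\<forall>i\<in>{1..N}. \<forall>j\<in>{1..N}. \<Delta> (u i j) = (\<Sum>k=1..N. i1 (u i k) * i2 (u k j))))"

text \<open>C(G) = C(G_N(Pis)): u satisfies R^Gr_p(u) for p in Pis, generates, and is universal
  among such families in C*-algebras (realised on the type 'c).\<close>
definition is_GN :: "('a::{real_normed_algebra_1,banach} \<Rightarrow> 'a) \<Rightarrow> 'a \<Rightarrow> nat
     \<Rightarrow> (nat \<Rightarrow> nat \<Rightarrow> 'a) \<Rightarrow> tcpart set \<Rightarrow> 'c::{real_normed_algebra_1,banach} itself \<Rightarrow> bool" where
  "is_GN st iu N u Pis (_::'c itself) \<longleftrightarrow>
     (\<forall>q\<in>Pis. RGr st N q u) \<and>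
     cstar_gen st iu {u i j | i j. i \<in> {1..N} \<and> j \<in> {1..N}} \<and>
     (\<forall>(st'::'c \<Rightarrow> 'c) iu' v. cstar st' iu' \<and> (\<forall>q\<in>Pis. RGr st' N q v) \<longrightarrow>
        (\<exists>h. unital_star_hom st iu st' iu' h \<and>
             (\<forall>i\<in>{1..N}. \<forall>j\<in>{1..N}. h (u i j) = v i j)))"

end

theory Submission
  imports Defs
begin

text \<open>Reflecting \<open>p\<close> swaps the two sides of \<open>R^Gr_p\<close> and transposing \<open>u\<close> swaps the indices of
  every monomial, so \<open>R^Gr_{p*}(u)\<close> is \<open>R^Gr_p(u\<^sup>T)\<close>, and everything reduces to the pair
  \<open>R^Gr_p(u)\<close>, \<open>R^Gr_p(u\<^sup>T)\<close>. These two are equivalent to \<open>R^Sp_p(u)\<close>, \<open>R^Sp_p(u\<^sup>T)\<close> by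
  double counting: all sets \<open>T_f\<close> have the same size, and summing the monomials
  \<open>u_{a b}\<close> over \<open>a \<in> T_f\<close>, \<open>b \<in> T_g\<close> in both orders trades a sum over one row for
  a sum over the other.

  For the final claim, the mixed-coloured pairs make \<open>u\<close> and its conjugate unitary, hence all tensor
  powers \<open>u^{\<otimes>w}\<close> are unitary. \<open>R^Gr_p(u)\<close> says that the 0-1 matrix \<open>T_p\<close> intertwines
  \<open>u^{\<otimes>\<omega>}\<close> and \<open>u^{\<otimes>\<omega>'}\<close>; unitarity turns this into the intertwining relation for
  \<open>T_p\<^sup>T\<close>, which is \<open>R^Gr_p(u\<^sup>T)\<close>. So only the mixed pairs in \<open>\<Pi>\<close> are used, not
  \<open>p \<in> \<langle>\<Pi>\<rangle>\<close>.\<close>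


section \<open>Labelings\<close>

lemma finite_labs: "finite (labs N n)"
proof -
  have "labs N n = {xs. set xs \<subseteq> {1..N} \<and> length xs = n}" unfolding labs_def by auto
  thus ?thesis using finite_lists_length_eq[of "{1..N}" n] by simp
qed

lemma labs_0: "labs N 0 = {[]}"
  by (auto simp: labs_def)

lemma labs_Cons: "a # as \<in> labs N (Suc k) \<longleftrightarrow> a \<in> {1..N} \<and> as \<in> labs N k"
  by (auto simp: labs_def)

lemma labs_Suc: "labs N (Suc k) = (\<lambda>(a, as). a # as) ` ({1..N} \<times> labs N k)"
proof (rule set_eqI)
  fix t
  show "t \<in> labs N (Suc k) \<longleftrightarrow> t \<in> (\<lambda>(a, as). a # as) ` ({1..N} \<times> labs N k)"
    by (cases t) (auto simp: labs_def)
qed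

lemma sum_labs_Suc: "(\<Sum>t\<in>labs N (Suc k). F t) = (\<Sum>a=1..N. \<Sum>as\<in>labs N k. F (a # as))"
proof -
  have "inj_on (\<lambda>(a, as). a # as) ({1..N} \<times> labs N k)" by (auto simp: inj_on_def)
  hence "(\<Sum>t\<in>labs N (Suc k). F t) = (\<Sum>(a, as)\<in>{1..N} \<times> labs N k. F (a # as))"
    unfolding labs_Suc by (simp add: sum.reindex split_def)
  thus ?thesis by (simp add: sum.cartesian_product)
qed

lemma labs_pairs: "labs N (Suc (Suc 0)) = (\<lambda>(a, b). [a, b]) ` ({1..N} \<times> {1..N})"
proof (rule set_eqI)
  fix t
  show "t \<in> labs N (Suc (Suc 0)) \<longleftrightarrow> t \<in> (\<lambda>(a, b). [a, b]) ` ({1..N} \<times> {1..N})"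
    by (cases t rule: remdups_adj.cases) (auto simp: labs_def)
qed

lemma labs_zero_labels: "t \<in> labs 0 n \<Longrightarrow> t = []"
  unfolding labs_def by (cases t) auto

lemma assigns_zero_labels_unique: "f \<in> assigns 0 p \<Longrightarrow> g \<in> assigns 0 p \<Longrightarrow> f = g"
  unfolding assigns_def by (cases "tblocks p = {}") auto

lemma monom_Nil [simp]: "monom st [] y a b = 1"
  by (simp add: monom_def)

lemma monom_Cons: "monom st (c # w) y (a # as) (b # bs) = cpow st c (y a b) * monom st w y as bs"
proof -
  have "[0..<length (c # w)] = 0 # map Suc [0..<length w]"
    by (simp add: upt_conv_Cons map_Suc_upt del: upt_Suc)
  thus ?thesis by (simp add: monom_def o_def)
qed

lemma monom_transpose: "monom st w (\<lambda>i j. y j i) a b = monom st w y b a"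
  by (simp add: monom_def)

lemma tcpart_block_unique:
  assumes "is_tcpart p" "B1 \<in> blks p" "B2 \<in> blks p" "x \<in> B1" "x \<in> B2"
  shows "B1 = B2"
  using assms unfolding is_tcpart_def partition_on_def pairwise_def disjnt_def by blast

lemma tblocks_meet_upper_row:
  assumes "is_tcpart p" "B \<in> tblocks p"
  shows "\<exists>i<length (up p). U i \<in> B"
  using assms unfolding tblocks_def is_tcpart_def partition_on_def pts_def by blast

lemma tblocks_meet_lower_row:
  assumes "is_tcpart p" "B \<in> tblocks p"
  shows "\<exists>i<length (lo p). L i \<in> B"
  using assms unfolding tblocks_def is_tcpart_def partition_on_def pts_def by blast

text \<open>A row is given by the embedding \<open>C\<close> (\<open>U\<close> or \<open>L\<close>) of its positions into the points;
  \<open>row_labs N p U (length (up p)) f\<close> is \<open>T_f\<close> and \<open>row_labs N p L (length (lo p)) f\<close> is \<open>T'_f\<close>.\<close>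

definition valid_row :: "tcpart \<Rightarrow> (nat \<Rightarrow> pt) \<Rightarrow> nat list \<Rightarrow> bool" where
  "valid_row p C t \<longleftrightarrow> (\<forall>a<length t. \<forall>b<length t. sameblk p (C a) (C b) \<longrightarrow> t ! a = t ! b)"

definition row_labs :: "nat \<Rightarrow> tcpart \<Rightarrow> (nat \<Rightarrow> pt) \<Rightarrow> nat \<Rightarrow> (pt set \<Rightarrow> nat) \<Rightarrow> nat list set" where
  "row_labs N p C n f = {t \<in> labs N n. valid_row p C t \<and>
     (\<forall>B\<in>tblocks p. \<forall>i<length t. C i \<in> B \<longrightarrow> t ! i = f B)}"

lemma Tu_row_labs: "Tu N p f = row_labs N p U (length (up p)) f"
  by (simp add: Tu_def row_labs_def valid_row_def valid_up_def)

lemma Tl_row_labs: "Tl N p f = row_labs N p L (length (lo p)) f"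
  by (simp add: Tl_def row_labs_def valid_row_def valid_lo_def)

lemma finite_row_labs: "finite (row_labs N p C n f)"
  by (rule finite_subset[OF _ finite_labs[of N n]]) (auto simp: row_labs_def)

text \<open>Relabelling the through-blocks is a bijection from \<open>T_f\<close> onto \<open>T_g\<close>, so all \<open>T_f\<close>
  have the same size.\<close>

definition relabel :: "tcpart \<Rightarrow> (nat \<Rightarrow> pt) \<Rightarrow> (pt set \<Rightarrow> nat) \<Rightarrow> nat list \<Rightarrow> nat list" where
  "relabel p C g t = map (\<lambda>i. if \<exists>B\<in>tblocks p. C i \<in> B
     then g (SOME B. B \<in> tblocks p \<and> C i \<in> B) else t ! i) [0..<length t]"

lemma length_relabel [simp]: "length (relabel p C g t) = length t"
  by (simp add: relabel_def)

lemma relabel_nth_through: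
  assumes "is_tcpart p" "B \<in> tblocks p" "C i \<in> B" "i < length t"
  shows "relabel p C g t ! i = g B"
proof -
  have "(SOME B. B \<in> tblocks p \<and> C i \<in> B) = B"
    using assms tcpart_block_unique[OF assms(1)] by (intro some_equality) (auto simp: tblocks_def)
  thus ?thesis using assms by (auto simp: relabel_def)
qed

lemma relabel_nth_other:
  "\<not> (\<exists>B\<in>tblocks p. C i \<in> B) \<Longrightarrow> i < length t \<Longrightarrow> relabel p C g t ! i = t ! i"
  by (simp add: relabel_def)

lemma relabel_labs:
  assumes "g \<in> assigns N p" "t \<in> labs N n"
  shows "relabel p C g t \<in> labs N n"
proof -
  have "relabel p C g t ! i \<in> {1..N}" if i: "i < length t" for i
  proof (cases "\<exists>B\<in>tblocks p. C i \<in> B")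
    case True
    hence "(SOME B. B \<in> tblocks p \<and> C i \<in> B) \<in> tblocks p" by (metis (mono_tags, lifting) someI)
    thus ?thesis using True i assms(1) by (simp add: relabel_def assigns_def PiE_iff)
  next
    case False
    thus ?thesis using i assms(2) by (simp add: relabel_nth_other labs_def subset_iff)
  qed
  thus ?thesis using assms(2) by (auto simp: labs_def in_set_conv_nth)
qed

lemma relabel_valid:
  assumes p: "is_tcpart p" and v: "valid_row p C t"
  shows "valid_row p C (relabel p C g t)"
  unfolding valid_row_def
proof (intro allI impI)
  fix a b
  assume a: "a < length (relabel p C g t)" and b: "b < length (relabel p C g t)"
    and ab: "sameblk p (C a) (C b)"
  then obtain B0 where B0: "B0 \<in> blks p" "C a \<in> B0" "C b \<in> B0" unfolding sameblk_def by blast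
  show "relabel p C g t ! a = relabel p C g t ! b"
  proof (cases "B0 \<in> tblocks p")
    case True
    thus ?thesis using relabel_nth_through[OF p True] B0 a b by simp
  next
    case False
    have "\<not> (\<exists>B\<in>tblocks p. C x \<in> B)" if "C x \<in> B0" for x
      using False that B0(1) tcpart_block_unique[OF p] by (auto simp: tblocks_def)
    thus ?thesis using relabel_nth_other B0 a b ab v by (simp add: valid_row_def)
  qed
qed

lemma relabel_in_row_labs:
  assumes "is_tcpart p" "g \<in> assigns N p" "t \<in> labs N n" "valid_row p C t"
  shows "relabel p C g t \<in> row_labs N p C n g"
  using relabel_labs[OF assms(2,3)] relabel_valid[OF assms(1,4)] relabel_nth_through[OF assms(1)]
  by (auto simp: row_labs_def)

lemma relabel_id:
  assumes "t \<in> row_labs N p C n f"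
  shows "relabel p C f t = t"
proof (rule nth_equalityI)
  fix i assume i: "i < length (relabel p C f t)"
  show "relabel p C f t ! i = t ! i"
  proof (cases "\<exists>B\<in>tblocks p. C i \<in> B")
    case True
    hence "(SOME B. B \<in> tblocks p \<and> C i \<in> B) \<in> tblocks p \<and> C i \<in> (SOME B. B \<in> tblocks p \<and> C i \<in> B)"
      by (metis (mono_tags, lifting) someI)
    thus ?thesis using assms i True by (auto simp: relabel_def row_labs_def)
  qed (use i in \<open>simp add: relabel_nth_other\<close>)
qed simp

lemma relabel_relabel: "relabel p C f (relabel p C g t) = relabel p C f t"
  by (rule nth_equalityI) (auto simp: relabel_def)

lemma relabel_bij:
  assumes "is_tcpart p" "f \<in> assigns N p" "g \<in> assigns N p"
  shows "bij_betw (relabel p C g) (row_labs N p C n f) (row_labs N p C n g)"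
proof (rule bij_betw_byWitness[where f' = "relabel p C f"])
  show "\<forall>t\<in>row_labs N p C n f. relabel p C f (relabel p C g t) = t"
    and "\<forall>t\<in>row_labs N p C n g. relabel p C g (relabel p C f t) = t"
    by (simp_all add: relabel_relabel relabel_id)
  show "relabel p C g ` row_labs N p C n f \<subseteq> row_labs N p C n g"
    using relabel_in_row_labs[OF assms(1,3)] by (auto simp: row_labs_def)
  show "relabel p C f ` row_labs N p C n g \<subseteq> row_labs N p C n f"
    using relabel_in_row_labs[OF assms(1,2)] by (auto simp: row_labs_def)
qed

lemma card_row_labs_eq:
  "is_tcpart p \<Longrightarrow> f \<in> assigns N p \<Longrightarrow> g \<in> assigns N p
   \<Longrightarrow> card (row_labs N p C n f) = card (row_labs N p C n g)"
  using relabel_bij bij_betw_same_card by blast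

lemma row_labs_nonempty:
  assumes "is_tcpart p" "f \<in> assigns N p" "N \<ge> 1"
  shows "row_labs N p C n f \<noteq> {}"
proof -
  have "replicate n 1 \<in> labs N n" "valid_row p C (replicate n 1)"
    using assms(3) by (auto simp: labs_def valid_row_def)
  thus ?thesis using relabel_in_row_labs[OF assms(1,2)] by blast
qed

lemma valid_row_in_row_labs:
  assumes meet: "\<forall>B\<in>tblocks p. \<exists>i<n. C i \<in> B" and t: "t \<in> labs N n" and v: "valid_row p C t"
  obtains f where "f \<in> assigns N p" "t \<in> row_labs N p C n f"
proof
  define f where "f B = (if B \<in> tblocks p then t ! (SOME i. i < n \<and> C i \<in> B) else undefined)" for B
  have len: "length t = n" using t by (simp add: labs_def)
  have pos: "(SOME i. i < n \<and> C i \<in> B) < n \<and> C (SOME i. i < n \<and> C i \<in> B) \<in> B"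
    if "B \<in> tblocks p" for B
    using someI_ex[of "\<lambda>i. i < n \<and> C i \<in> B"] meet that by blast
  show "f \<in> assigns N p"
    unfolding assigns_def
  proof (rule PiE_I)
    fix B assume B: "B \<in> tblocks p"
    have "f B \<in> set t" using pos[OF B] len B by (simp add: f_def)
    thus "f B \<in> {1..N}" using t by (auto simp: labs_def)
  qed (simp add: f_def)
  have "t ! i = f B" if B: "B \<in> tblocks p" and i: "i < length t" "C i \<in> B" for B i
  proof -
    have "sameblk p (C i) (C (SOME i. i < n \<and> C i \<in> B))"
      using pos[OF B] i B unfolding sameblk_def tblocks_def by blast
    thus ?thesis using v i pos[OF B] len B unfolding valid_row_def f_def by simp
  qed
  thus "t \<in> row_labs N p C n f" using t v by (simp add: row_labs_def)
qed

lemma row_labs_assign_unique: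
  assumes meet: "\<forall>B\<in>tblocks p. \<exists>i<n. C i \<in> B"
    and "f \<in> assigns N p" "g \<in> assigns N p" "t \<in> row_labs N p C n f" "t \<in> row_labs N p C n g"
  shows "f = g"
proof
  fix B
  show "f B = g B"
  proof (cases "B \<in> tblocks p")
    case True
    then obtain i where i: "i < n" "C i \<in> B" using meet by blast
    have len: "i < length t" using assms(4) i by (simp add: row_labs_def labs_def)
    have "t ! i = f B" using assms(4) True len i(2) by (simp add: row_labs_def)
    moreover have "t ! i = g B" using assms(5) True len i(2) by (simp add: row_labs_def)
    ultimately show ?thesis by simp
  next
    case False
    thus ?thesis using assms(2,3) PiE_arb[of _ "tblocks p" "\<lambda>_. {1..N}" B]
      unfolding assigns_def by metis
  qed
qed

lemma finite_Tu: "finite (Tu N p f)"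
  and finite_Tl: "finite (Tl N p f)"
  by (simp_all add: Tu_row_labs Tl_row_labs finite_row_labs)

lemma card_Tu_eq:
  "is_tcpart p \<Longrightarrow> f \<in> assigns N p \<Longrightarrow> g \<in> assigns N p \<Longrightarrow> card (Tu N p f) = card (Tu N p g)"
  unfolding Tu_row_labs by (rule card_row_labs_eq)

lemma card_Tl_eq:
  "is_tcpart p \<Longrightarrow> f \<in> assigns N p \<Longrightarrow> g \<in> assigns N p \<Longrightarrow> card (Tl N p f) = card (Tl N p g)"
  unfolding Tl_row_labs by (rule card_row_labs_eq)

lemma Tl_nonempty_transfer:
  assumes "is_tcpart p" "f \<in> assigns N p" "g \<in> assigns N p" "\<gamma> \<in> Tl N p g"
  obtains \<gamma>' where "\<gamma>' \<in> Tl N p f"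
  using card_Tl_eq[OF assms(1-3)] assms(4) finite_Tl[of N p]
  by (metis card_0_eq emptyE ex_in_conv)

lemma Tu_inter_labs [simp]: "Tu N p f \<inter> labs N (length (up p)) = Tu N p f"
  and Tl_inter_labs [simp]: "Tl N p f \<inter> labs N (length (lo p)) = Tl N p f"
  and T0u_inter_labs [simp]: "T0u N p \<inter> labs N (length (up p)) = T0u N p"
  and T0l_inter_labs [simp]: "T0l N p \<inter> labs N (length (lo p)) = T0l N p"
  by (auto simp: Tu_def Tl_def T0u_def T0l_def)

lemma Tu_labs: "t \<in> Tu N p f \<Longrightarrow> t \<in> labs N (length (up p))"
  and Tl_labs: "x \<in> Tl N p f \<Longrightarrow> x \<in> labs N (length (lo p))"
  by (simp_all add: Tu_def Tl_def)

lemma Tu_if_valid_up: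
  assumes "is_tcpart p" "t \<in> labs N (length (up p))" "valid_up p t"
  obtains f where "f \<in> assigns N p" "t \<in> Tu N p f"
  using valid_row_in_row_labs[of p "length (up p)" U t N] tblocks_meet_upper_row[OF assms(1)] assms(2,3)
  by (auto simp: Tu_row_labs valid_row_def valid_up_def)

lemma Tl_if_valid_lo:
  assumes "is_tcpart p" "x \<in> labs N (length (lo p))" "valid_lo p x"
  obtains f where "f \<in> assigns N p" "x \<in> Tl N p f"
  using valid_row_in_row_labs[of p "length (lo p)" L x N] tblocks_meet_lower_row[OF assms(1)] assms(2,3)
  by (auto simp: Tl_row_labs valid_row_def valid_lo_def)

lemma T0u_labels_pos: "\<gamma> \<in> T0u N p \<Longrightarrow> N \<ge> 1"
  and T0l_labels_pos: "\<gamma> \<in> T0l N p \<Longrightarrow> N \<ge> 1"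
  unfolding T0u_def T0l_def valid_up_def valid_lo_def by (cases N; auto dest: labs_zero_labels)+

section \<open>Reflection\<close>

lemma flip_pt_flip_pt [simp]: "flip_pt (flip_pt x) = x"
  by (cases x) auto

lemma flip_pt_image_image [simp]: "flip_pt ` flip_pt ` B = B"
  by (force simp: image_image)

lemma mem_flip_pt_image: "x \<in> flip_pt ` B \<longleftrightarrow> flip_pt x \<in> B"
  by force

lemma up_pinv [simp]: "up (pinv p) = lo p"
  and lo_pinv [simp]: "lo (pinv p) = up p"
  by (simp_all add: pinv_def)

lemma pinv_pinv [simp]: "pinv (pinv p) = p"
  by (cases p) (simp add: pinv_def image_image)

lemma blks_pinv: "blks (pinv p) = (`) flip_pt ` blks p"
  by (simp add: pinv_def)

lemma sameblk_pinv: "sameblk (pinv p) x y \<longleftrightarrow> sameblk p (flip_pt x) (flip_pt y)"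
  unfolding sameblk_def blks_pinv by (auto simp: mem_flip_pt_image)

lemma tblocks_pinv: "B \<in> tblocks (pinv p) \<longleftrightarrow> flip_pt ` B \<in> tblocks p"
proof -
  have "B \<in> blks (pinv p) \<longleftrightarrow> flip_pt ` B \<in> blks p"
    unfolding blks_pinv by (metis flip_pt_image_image image_eqI image_iff)
  thus ?thesis unfolding tblocks_def by (auto simp: mem_flip_pt_image)
qed

lemma T0u_pinv: "T0u N (pinv p) = T0l N p"
  and T0l_pinv: "T0l N (pinv p) = T0u N p"
  by (simp_all add: T0u_def T0l_def valid_up_def valid_lo_def sameblk_pinv)

lemma pinv_assigns:
  assumes f: "f \<in> assigns N p"
  obtains f' where "f' \<in> assigns N (pinv p)" "Tu N (pinv p) f' = Tl N p f" "Tl N (pinv p) f' = Tu N p f"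
proof
  define f' where "f' B = (if B \<in> tblocks (pinv p) then f (flip_pt ` B) else undefined)" for B
  show "f' \<in> assigns N (pinv p)"
    using f unfolding assigns_def f'_def by (auto simp: tblocks_pinv)
  have through: "(\<forall>B\<in>tblocks (pinv p). \<forall>i<length t. C i \<in> B \<longrightarrow> t ! i = f' B) \<longleftrightarrow>
      (\<forall>B\<in>tblocks p. \<forall>i<length t. flip_pt (C i) \<in> B \<longrightarrow> t ! i = f B)" for t C
  proof
    assume H: "\<forall>B\<in>tblocks (pinv p). \<forall>i<length t. C i \<in> B \<longrightarrow> t ! i = f' B"
    show "\<forall>B\<in>tblocks p. \<forall>i<length t. flip_pt (C i) \<in> B \<longrightarrow> t ! i = f B"
    proof (intro ballI allI impI)
      fix B i assume "B \<in> tblocks p" "i < length t" "flip_pt (C i) \<in> B"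
      moreover from this have "flip_pt ` B \<in> tblocks (pinv p)" "C i \<in> flip_pt ` B"
        by (simp_all add: tblocks_pinv mem_flip_pt_image)
      ultimately show "t ! i = f B" using H by (auto simp: f'_def)
    qed
  qed (auto simp: f'_def tblocks_pinv mem_flip_pt_image[symmetric])
  show "Tu N (pinv p) f' = Tl N p f" "Tl N (pinv p) f' = Tu N p f"
    unfolding Tu_def Tl_def valid_up_def valid_lo_def sameblk_pinv
    using through[of _ U] through[of _ L] by auto
qed

lemma pinv_assigns':
  assumes "f' \<in> assigns N (pinv p)"
  obtains f where "f \<in> assigns N p" "Tu N (pinv p) f' = Tl N p f" "Tl N (pinv p) f' = Tu N p f"
  using pinv_assigns[OF assms, unfolded pinv_pinv] by (metis that)

lemma RGr_pinv_transpose: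
  assumes R: "RGr st N p y"
  shows "RGr st N (pinv p) (\<lambda>i j. y j i)"
  unfolding RGr_def monom_transpose[where y = y] up_pinv lo_pinv T0u_pinv T0l_pinv
proof (intro conjI ballI)
  fix f' g' \<gamma> \<gamma>'
  assume f': "f' \<in> assigns N (pinv p)" and g': "g' \<in> assigns N (pinv p)"
    and \<gamma>: "\<gamma> \<in> Tu N (pinv p) g'" and \<gamma>': "\<gamma>' \<in> Tl N (pinv p) f'"
  obtain f where f: "f \<in> assigns N p" "Tu N (pinv p) f' = Tl N p f" "Tl N (pinv p) f' = Tu N p f"
    by (rule pinv_assigns'[OF f'])
  obtain g where g: "g \<in> assigns N p" "Tu N (pinv p) g' = Tl N p g" "Tl N (pinv p) g' = Tu N p g"
    by (rule pinv_assigns'[OF g'])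
  have "\<gamma>' \<in> Tu N p f" "\<gamma> \<in> Tl N p g" using \<gamma> \<gamma>' f(3) g(2) by simp_all
  from R[unfolded RGr_def, THEN conjunct1, rule_format, OF g(1) f(1) this]
  show "(\<Sum>t\<in>Tu N (pinv p) f'. monom st (lo p) y \<gamma> t) = (\<Sum>t'\<in>Tl N (pinv p) g'. monom st (up p) y t' \<gamma>')"
    unfolding f(2) g(3) by (rule sym)
next
  fix f' \<gamma> assume f': "f' \<in> assigns N (pinv p)" and \<gamma>: "\<gamma> \<in> T0l N p"
  obtain f where f: "f \<in> assigns N p" "Tu N (pinv p) f' = Tl N p f" "Tl N (pinv p) f' = Tu N p f"
    by (rule pinv_assigns'[OF f'])
  show "(\<Sum>t\<in>Tu N (pinv p) f'. monom st (lo p) y \<gamma> t) = 0"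
    unfolding f(2) using R[unfolded RGr_def, THEN conjunct2, THEN conjunct2, rule_format, OF f(1) \<gamma>] .
next
  fix g' \<gamma>' assume g': "g' \<in> assigns N (pinv p)" and \<gamma>': "\<gamma>' \<in> T0u N p"
  obtain g where g: "g \<in> assigns N p" "Tu N (pinv p) g' = Tl N p g" "Tl N (pinv p) g' = Tu N p g"
    by (rule pinv_assigns'[OF g'])
  show "(\<Sum>t'\<in>Tl N (pinv p) g'. monom st (up p) y t' \<gamma>') = 0"
    unfolding g(3) using R[unfolded RGr_def, THEN conjunct2, THEN conjunct1, rule_format, OF g(1) \<gamma>'] .
qed

section \<open>Double counting\<close>

lemma constant_row_col_sums_eq:
  fixes h :: "'i \<Rightarrow> 'j \<Rightarrow> 'a::real_vector"
  assumes "finite S" "finite T" "card S = card T" "S \<noteq> {}"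
    and rows: "\<And>a. a \<in> S \<Longrightarrow> (\<Sum>b\<in>T. h a b) = Y"
    and cols: "\<And>b. b \<in> T \<Longrightarrow> (\<Sum>a\<in>S. h a b) = X"
  shows "X = Y"
proof -
  have "real (card S) *\<^sub>R Y = (\<Sum>a\<in>S. Y)" by (simp add: sum_constant_scaleR)
  also have "\<dots> = (\<Sum>a\<in>S. \<Sum>b\<in>T. h a b)" using rows by (intro sum.cong) simp_all
  also have "\<dots> = (\<Sum>b\<in>T. \<Sum>a\<in>S. h a b)" by (rule sum.swap)
  also have "\<dots> = (\<Sum>b\<in>T. X)" using cols by (intro sum.cong) simp_all
  also have "\<dots> = real (card S) *\<^sub>R X" using assms(3) by (simp add: sum_constant_scaleR)
  finally show ?thesis using assms(1,4) by simp
qed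

text \<open>The heart of both directions: with \<open>R^Gr\<close> for \<open>y\<close> and \<open>y\<^sup>T\<close>, summing
  \<open>monom st (up p) y a b\<close> over \<open>a \<in> T_f\<close>, \<open>b \<in> T_g\<close> in both orders equates the two
  lower-row sums.\<close>

lemma RGr_transpose_lower_sums:
  fixes y :: "nat \<Rightarrow> nat \<Rightarrow> 'a::real_algebra_1"
  assumes p: "is_tcpart p" and R: "RGr st N p y" and RT: "RGr st N p (\<lambda>i j. y j i)"
    and f: "f \<in> assigns N p" and g: "g \<in> assigns N p"
    and \<gamma>'': "\<gamma>'' \<in> Tl N p f" and \<gamma>': "\<gamma>' \<in> Tl N p g"
  shows "(\<Sum>t\<in>Tl N p f. monom st (lo p) y t \<gamma>') = (\<Sum>t'\<in>Tl N p g. monom st (lo p) y \<gamma>'' t')"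
proof (cases "N = 0")
  case True
  hence "f = g" "lo p = []"
    using assigns_zero_labels_unique f g \<gamma>'' by (auto simp: Tl_def labs_def)
  thus ?thesis by simp
next
  case False
  have ne: "Tu N p f \<noteq> {}"
    using row_labs_nonempty[OF p f] False by (simp add: Tu_row_labs)
  have rows: "(\<Sum>b\<in>Tu N p g. monom st (up p) y a b) = (\<Sum>t\<in>Tl N p f. monom st (lo p) y t \<gamma>')"
    if "a \<in> Tu N p f" for a
    using RT[unfolded RGr_def monom_transpose[where y = y], THEN conjunct1, rule_format, OF g f that \<gamma>'] .
  have cols: "(\<Sum>a\<in>Tu N p f. monom st (up p) y a b) = (\<Sum>t'\<in>Tl N p g. monom st (lo p) y \<gamma>'' t')"
    if "b \<in> Tu N p g" for b
    using R[unfolded RGr_def, THEN conjunct1, rule_format, OF f g that \<gamma>''] .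
  show ?thesis
    using constant_row_col_sums_eq[OF finite_Tu finite_Tu card_Tu_eq[OF p f g] ne rows cols] by (rule sym)
qed

lemma RSp_if_RGr_and_RGr_transpose:
  fixes y :: "nat \<Rightarrow> nat \<Rightarrow> 'a::real_algebra_1"
  assumes p: "is_tcpart p" and R: "RGr st N p y" and RT: "RGr st N p (\<lambda>i j. y j i)"
  shows "RSp st N N p y"
  unfolding RSp_def Tu_inter_labs Tl_inter_labs T0u_inter_labs T0l_inter_labs
proof (intro conjI ballI)
  fix f g \<gamma> \<gamma>'
  assume f: "f \<in> assigns N p" and g: "g \<in> assigns N p"
    and \<gamma>: "\<gamma> \<in> Tu N p g" and \<gamma>': "\<gamma>' \<in> Tl N p g"
  obtain \<gamma>'' where \<gamma>'': "\<gamma>'' \<in> Tl N p f" using Tl_nonempty_transfer[OF p f g \<gamma>'] .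
  show "(\<Sum>t\<in>Tu N p f. monom st (up p) y t \<gamma>) = (\<Sum>t'\<in>Tl N p f. monom st (lo p) y t' \<gamma>')"
    using R[unfolded RGr_def, THEN conjunct1, rule_format, OF f g \<gamma> \<gamma>'']
      RGr_transpose_lower_sums[OF p R RT f g \<gamma>'' \<gamma>'] by simp
next
  fix f \<gamma> assume "f \<in> assigns N p" "\<gamma> \<in> T0u N p"
  thus "(\<Sum>t\<in>Tu N p f. monom st (up p) y t \<gamma>) = 0"
    using R[unfolded RGr_def, THEN conjunct2, THEN conjunct1, rule_format] by blast
next
  fix f \<gamma>' assume "f \<in> assigns N p" "\<gamma>' \<in> T0l N p"
  thus "(\<Sum>t'\<in>Tl N p f. monom st (lo p) y t' \<gamma>') = 0"
    using RT[unfolded RGr_def monom_transpose[where y = y], THEN conjunct2, THEN conjunct2, rule_format]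
    by blast
qed

lemma RGr_if_RSp_and_RSp_transpose:
  fixes y :: "nat \<Rightarrow> nat \<Rightarrow> 'a::real_algebra_1"
  assumes p: "is_tcpart p" and S: "RSp st N N p y" and ST: "RSp st N N p (\<lambda>i j. y j i)"
  shows "RGr st N p y"
  unfolding RGr_def
proof (intro conjI ballI)
  note S' = S[unfolded RSp_def Tu_inter_labs Tl_inter_labs T0u_inter_labs T0l_inter_labs]
  note ST' = ST[unfolded RSp_def Tu_inter_labs Tl_inter_labs T0u_inter_labs T0l_inter_labs
      monom_transpose[where y = y]]
  fix f g \<gamma> \<gamma>'
  assume f: "f \<in> assigns N p" and g: "g \<in> assigns N p"
    and \<gamma>: "\<gamma> \<in> Tu N p g" and \<gamma>': "\<gamma>' \<in> Tl N p f"
  obtain \<gamma>'' where \<gamma>'': "\<gamma>'' \<in> Tl N p g" using Tl_nonempty_transfer[OF p g f \<gamma>'] .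
  have ne: "Tu N p f \<noteq> {}"
    using card_Tu_eq[OF p f g] \<gamma> finite_Tu card_0_eq by (metis empty_iff)
  have rows: "(\<Sum>b\<in>Tu N p g. monom st (up p) y a b) = (\<Sum>t'\<in>Tl N p g. monom st (lo p) y \<gamma>' t')"
    if "a \<in> Tu N p f" for a
    using ST'[THEN conjunct1, rule_format, OF g f that \<gamma>'] .
  have cols: "(\<Sum>a\<in>Tu N p f. monom st (up p) y a b) = (\<Sum>t\<in>Tu N p f. monom st (up p) y t \<gamma>)"
    if "b \<in> Tu N p g" for b
    using S'[THEN conjunct1, rule_format, OF f g that \<gamma>''] S'[THEN conjunct1, rule_format, OF f g \<gamma> \<gamma>'']
    by simp
  show "(\<Sum>t\<in>Tu N p f. monom st (up p) y t \<gamma>) = (\<Sum>t'\<in>Tl N p g. monom st (lo p) y \<gamma>' t')"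
    by (rule constant_row_col_sums_eq[OF finite_Tu finite_Tu card_Tu_eq[OF p f g] ne rows cols])
next
  fix f \<gamma> assume "f \<in> assigns N p" "\<gamma> \<in> T0u N p"
  thus "(\<Sum>t\<in>Tu N p f. monom st (up p) y t \<gamma>) = 0"
    using S[unfolded RSp_def T0u_inter_labs, THEN conjunct2, THEN conjunct1, rule_format] by blast
next
  fix g \<gamma>' assume "g \<in> assigns N p" "\<gamma>' \<in> T0l N p"
  thus "(\<Sum>t'\<in>Tl N p g. monom st (lo p) y \<gamma>' t') = 0"
    using ST[unfolded RSp_def T0l_inter_labs monom_transpose[where y = y], THEN conjunct2, THEN conjunct2, rule_format]
    by blast
qed

section \<open>Unitarity and transposition\<close>

definition anti_involution :: "('a::ring_1 \<Rightarrow> 'a) \<Rightarrow> bool" where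
  "anti_involution st \<longleftrightarrow>
     (\<forall>x. st (st x) = x) \<and> (\<forall>x y. st (x + y) = st x + st y) \<and> (\<forall>x y. st (x * y) = st y * st x)"

lemma
  assumes "anti_involution st"
  shows anti_involution_involutive: "st (st x) = x"
    and anti_involution_mult: "st (x * y) = st y * st x"
    and anti_involution_zero: "st 0 = 0"
    and anti_involution_one: "st 1 = 1"
    and anti_involution_sum: "st (\<Sum>i\<in>A. f i) = (\<Sum>i\<in>A. st (f i))"
proof -
  have add: "st (x + y) = st x + st y" for x y using assms by (simp add: anti_involution_def)
  show "st (st x) = x" "st (x * y) = st y * st x" using assms by (simp_all add: anti_involution_def)
  show zero: "st 0 = 0" using add[of 0 0] by simp
  show "st 1 = 1" using assms unfolding anti_involution_def by (metis mult_1_left)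
  show "st (\<Sum>i\<in>A. f i) = (\<Sum>i\<in>A. st (f i))"
    using sum_comp_morphism[of st f A] add zero by (simp add: o_def)
qed

definition biunitary :: "('a::ring_1 \<Rightarrow> 'a) \<Rightarrow> nat \<Rightarrow> (nat \<Rightarrow> nat \<Rightarrow> 'a) \<Rightarrow> bool" where
  "biunitary st N u \<longleftrightarrow> (\<forall>a\<in>{1..N}. \<forall>b\<in>{1..N}.
      (\<Sum>j=1..N. u a j * st (u b j)) = (if a = b then 1 else 0) \<and>
      (\<Sum>j=1..N. st (u a j) * u b j) = (if a = b then 1 else 0) \<and>
      (\<Sum>j=1..N. st (u j a) * u j b) = (if a = b then 1 else 0) \<and>
      (\<Sum>j=1..N. u j a * st (u j b)) = (if a = b then 1 else 0))"

lemma RGr_upper_pair: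
  assumes R: "RGr st N (TCP [c1, c2] [] {{U 0, U 1}}) y" and a: "a \<in> {1..N}" and b: "b \<in> {1..N}"
  shows "(\<Sum>j=1..N. cpow st c1 (y j a) * cpow st c2 (y j b)) = (if a = b then 1 else 0)"
proof -
  let ?p = "TCP [c1, c2] [] {{U 0, U 1}}"
  define f :: "pt set \<Rightarrow> nat" where "f = (\<lambda>_. undefined)"
  have tb: "tblocks ?p = {}" by (auto simp: tblocks_def)
  have f: "f \<in> assigns N ?p" unfolding assigns_def tb f_def by simp
  have valid: "valid_up ?p [x, z] \<longleftrightarrow> x = z" for x z
    unfolding valid_up_def sameblk_def by (auto simp: less_Suc_eq)
  have Tu: "Tu N ?p f = (\<lambda>j. [j, j]) ` {1..N}"
    by (auto simp: Tu_def tb labs_pairs valid simp del: One_nat_def)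
  have Tl: "Tl N ?p f = {[]}" by (auto simp: Tl_def labs_def valid_lo_def)
  have sum: "(\<Sum>t\<in>Tu N ?p f. monom st [c1, c2] y t [a, b]) = (\<Sum>j=1..N. cpow st c1 (y j a) * cpow st c2 (y j b))"
    unfolding Tu by (subst sum.reindex) (auto simp: inj_on_def monom_Cons)
  show ?thesis
  proof (cases "a = b")
    case True
    hence "[a, b] \<in> Tu N ?p f" using a Tu by auto
    from R[unfolded RGr_def, THEN conjunct1, rule_format, OF f f this] show ?thesis
      using sum True Tl by simp
  next
    case False
    hence "[a, b] \<in> T0u N ?p" using a b valid[of a b] by (auto simp: T0u_def labs_def)
    from R[unfolded RGr_def, THEN conjunct2, THEN conjunct1, rule_format, OF f this] show ?thesis
      using sum False by simp
  qed
qed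

lemma RGr_lower_pair:
  assumes R: "RGr st N (TCP [] [c1, c2] {{L 0, L 1}}) y" and "a \<in> {1..N}" "b \<in> {1..N}"
  shows "(\<Sum>j=1..N. cpow st c1 (y a j) * cpow st c2 (y b j)) = (if a = b then 1 else 0)"
proof -
  have "pinv (TCP [] [c1, c2] {{L 0, L 1}}) = TCP [c1, c2] [] {{U 0, U 1}}"
    by (simp add: pinv_def)
  thus ?thesis using RGr_upper_pair RGr_pinv_transpose[OF R] assms(2,3) by fastforce
qed

lemma biunitary_if_mixed_pairs:
  assumes "\<forall>q\<in>mixed_pairs. RGr st N q u"
  shows "biunitary st N u"
  using assms RGr_upper_pair[of st N C1 CS u] RGr_upper_pair[of st N CS C1 u]
    RGr_lower_pair[of st N C1 CS u] RGr_lower_pair[of st N CS C1 u]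
  by (simp add: biunitary_def mixed_pairs_def)

text \<open>The tensor powers \<open>u^{\<otimes>w}\<close>, with entries \<open>monom st w u\<close>, inherit biunitarity from \<open>u\<close>.\<close>

lemma monom_rows_orthonormal:
  assumes st: "anti_involution st" and u: "biunitary st N u"
  shows "t \<in> labs N (length w) \<Longrightarrow> r \<in> labs N (length w) \<Longrightarrow>
    (\<Sum>g\<in>labs N (length w). monom st w u t g * st (monom st w u r g)) = (if t = r then 1 else 0)"
proof (induction w arbitrary: t r)
  case Nil
  thus ?case by (simp add: labs_0 anti_involution_one[OF st])
next
  case (Cons c w)
  obtain a as b bs where t: "t = a # as" and r: "r = b # bs"
    using Cons.prems by (cases t; cases r) (auto simp: labs_def)
  have a: "a \<in> {1..N}" "as \<in> labs N (length w)" and b: "b \<in> {1..N}" "bs \<in> labs N (length w)"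
    using Cons.prems t r labs_Cons by auto
  have row: "(\<Sum>j=1..N. cpow st c (u a j) * st (cpow st c (u b j))) = (if a = b then 1 else 0)"
    using u a(1) b(1) by (cases c) (simp_all add: biunitary_def anti_involution_involutive[OF st])
  let ?M = "monom st w u"
  have "(\<Sum>g\<in>labs N (length (c # w)). monom st (c # w) u t g * st (monom st (c # w) u r g))
     = (\<Sum>j=1..N. cpow st c (u a j) * (\<Sum>gs\<in>labs N (length w). ?M as gs * st (?M bs gs)) * st (cpow st c (u b j)))"
    by (simp add: sum_labs_Suc t r monom_Cons anti_involution_mult[OF st] mult.assoc
        sum_distrib_left sum_distrib_right)
  also have "\<dots> = (if as = bs then 1 else 0) * (\<Sum>j=1..N. cpow st c (u a j) * st (cpow st c (u b j)))"
    using Cons.IH[OF a(2) b(2)] by simp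
  also have "\<dots> = (if t = r then 1 else 0)" using row t r by simp
  finally show ?case .
qed

lemma monom_cols_orthonormal:
  assumes st: "anti_involution st" and u: "biunitary st N u"
  shows "t \<in> labs N (length w) \<Longrightarrow> r \<in> labs N (length w) \<Longrightarrow>
    (\<Sum>g\<in>labs N (length w). st (monom st w u g t) * monom st w u g r) = (if t = r then 1 else 0)"
proof (induction w arbitrary: t r)
  case Nil
  thus ?case by (simp add: labs_0 anti_involution_one[OF st])
next
  case (Cons c w)
  obtain a as b bs where t: "t = a # as" and r: "r = b # bs"
    using Cons.prems by (cases t; cases r) (auto simp: labs_def)
  have a: "a \<in> {1..N}" "as \<in> labs N (length w)" and b: "b \<in> {1..N}" "bs \<in> labs N (length w)"
    using Cons.prems t r labs_Cons by auto
  have col: "(\<Sum>j=1..N. st (cpow st c (u j a)) * cpow st c (u j b)) = (if a = b then 1 else 0)"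
    using u a(1) b(1) by (cases c) (simp_all add: biunitary_def anti_involution_involutive[OF st])
  let ?M = "monom st w u"
  have "(\<Sum>g\<in>labs N (length (c # w)). st (monom st (c # w) u g t) * monom st (c # w) u g r)
     = (\<Sum>gs\<in>labs N (length w). st (?M gs as) * (\<Sum>j=1..N. st (cpow st c (u j a)) * cpow st c (u j b)) * ?M gs bs)"
    by (simp add: sum_labs_Suc t r monom_Cons anti_involution_mult[OF st] mult.assoc
        sum_distrib_left sum_distrib_right) (rule sum.swap)
  also have "\<dots> = (if a = b then 1 else 0) * (\<Sum>gs\<in>labs N (length w). st (?M gs as) * ?M gs bs)"
    using col by simp
  also have "\<dots> = (if t = r then 1 else 0)" using Cons.IH[OF a(2) b(2)] t r by simp
  finally show ?case .
qed

text \<open>In matrix form, \<open>A V = W A\<close> together with \<open>V V\<^sup>* = 1\<close> and \<open>W\<^sup>* W = 1\<close> gives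
  \<open>W\<^sup>* A = A V\<^sup>*\<close>; applying the anti-involution entrywise to this 0-1 identity yields
  \<open>A\<^sup>T W = V A\<^sup>T\<close>.\<close>

lemma intertwiner_transpose:
  fixes st :: "'a::ring_1 \<Rightarrow> 'a" and A :: "'l \<Rightarrow> 'k \<Rightarrow> bool"
    and V :: "'k \<Rightarrow> 'k \<Rightarrow> 'a" and W :: "'l \<Rightarrow> 'l \<Rightarrow> 'a"
  assumes st: "anti_involution st" and K: "finite K" and K': "finite K'"
    and V: "\<And>t r. t \<in> K \<Longrightarrow> r \<in> K \<Longrightarrow> (\<Sum>g\<in>K. V t g * st (V r g)) = (if t = r then 1 else 0)"
    and W: "\<And>a b. a \<in> K' \<Longrightarrow> b \<in> K' \<Longrightarrow> (\<Sum>x\<in>K'. st (W x a) * W x b) = (if a = b then 1 else 0)"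
    and AV_WA: "\<And>x g. x \<in> K' \<Longrightarrow> g \<in> K \<Longrightarrow>
      (\<Sum>t\<in>K. if A x t then V t g else 0) = (\<Sum>t'\<in>K'. if A t' g then W x t' else 0)"
    and r: "r \<in> K" and s: "s \<in> K'"
  shows "(\<Sum>x\<in>K'. if A x r then W x s else 0) = (\<Sum>g\<in>K. if A s g then V r g else 0)"
proof -
  define AVs where "AVs t' = (\<Sum>g\<in>K. if A t' g then st (V r g) else 0)" for t'
  have A_WAVs: "(if A x r then 1 else 0) = (\<Sum>t'\<in>K'. W x t' * AVs t')" if x: "x \<in> K'" for x
  proof -
    have "(if A x r then 1 else 0) = (\<Sum>t\<in>K. if t = r then (if A x t then 1 else 0) else 0)"
      using r by (simp add: sum.delta[OF K])
    also have "\<dots> = (\<Sum>t\<in>K. \<Sum>g\<in>K. (if A x t then V t g else 0) * st (V r g))"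
    proof (intro sum.cong refl)
      fix t assume "t \<in> K"
      thus "(if t = r then (if A x t then 1 else 0) else 0) = (\<Sum>g\<in>K. (if A x t then V t g else 0) * st (V r g))"
        using V[OF _ r] by (cases "A x t") auto
    qed
    also have "\<dots> = (\<Sum>g\<in>K. (\<Sum>t\<in>K. if A x t then V t g else 0) * st (V r g))"
      by (subst sum.swap) (simp add: sum_distrib_right)
    also have "\<dots> = (\<Sum>g\<in>K. (\<Sum>t'\<in>K'. if A t' g then W x t' else 0) * st (V r g))"
      using AV_WA[OF x] by (intro sum.cong) simp_all
    also have "\<dots> = (\<Sum>t'\<in>K'. W x t' * AVs t')"
      unfolding AVs_def sum_distrib_left sum_distrib_right
      by (subst sum.swap) (intro sum.cong refl, simp)
    finally show ?thesis .
  qed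
  have "(\<Sum>x\<in>K'. st (W x s) * (if A x r then 1 else 0)) = (\<Sum>t'\<in>K'. (\<Sum>x\<in>K'. st (W x s) * W x t') * AVs t')"
    using A_WAVs by (simp add: sum_distrib_left sum_distrib_right mult.assoc) (rule sum.swap)
  also have "\<dots> = (\<Sum>t'\<in>K'. if s = t' then AVs t' else 0)"
    using W[OF s] by (intro sum.cong) simp_all
  also have "\<dots> = AVs s" using s by (simp add: sum.delta'[OF K'])
  finally have "st (\<Sum>x\<in>K'. st (W x s) * (if A x r then 1 else 0)) = st (AVs s)" by simp
  moreover have "st (\<Sum>x\<in>K'. st (W x s) * (if A x r then 1 else 0)) = (\<Sum>x\<in>K'. if A x r then W x s else 0)"
    unfolding anti_involution_sum[OF st]
    by (intro sum.cong refl) (simp add: anti_involution_mult[OF st] anti_involution_involutive[OF st]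
        anti_involution_zero[OF st] anti_involution_one[OF st] split: if_split)
  moreover have "st (AVs s) = (\<Sum>g\<in>K. if A s g then V r g else 0)"
    unfolding AVs_def anti_involution_sum[OF st]
    by (intro sum.cong refl) (simp add: anti_involution_involutive[OF st] anti_involution_zero[OF st] split: if_split)
  ultimately show ?thesis by simp
qed

text \<open>The entries of the 0-1 matrix \<open>T_p\<close>.\<close>

definition lab_delta :: "nat \<Rightarrow> tcpart \<Rightarrow> nat list \<Rightarrow> nat list \<Rightarrow> bool" where
  "lab_delta N p x t \<longleftrightarrow> (\<exists>f\<in>assigns N p. x \<in> Tl N p f \<and> t \<in> Tu N p f)"

lemma lab_delta_row:
  assumes p: "is_tcpart p" and f: "f \<in> assigns N p" and x: "x \<in> Tl N p f"
  shows "{t \<in> labs N (length (up p)). lab_delta N p x t} = Tu N p f"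
proof -
  have "g = f" if "g \<in> assigns N p" "x \<in> Tl N p g" for g
    using row_labs_assign_unique[OF _ that(1) f] tblocks_meet_lower_row[OF p] that(2) x
    unfolding Tl_row_labs by blast
  thus ?thesis using f x Tu_labs unfolding lab_delta_def by blast
qed

lemma lab_delta_col:
  assumes p: "is_tcpart p" and f: "f \<in> assigns N p" and t: "t \<in> Tu N p f"
  shows "{x \<in> labs N (length (lo p)). lab_delta N p x t} = Tl N p f"
proof -
  have "g = f" if "g \<in> assigns N p" "t \<in> Tu N p g" for g
    using row_labs_assign_unique[OF _ that(1) f] tblocks_meet_upper_row[OF p] that(2) t
    unfolding Tu_row_labs by blast
  thus ?thesis using f t Tl_labs unfolding lab_delta_def by blast
qed

lemma lab_delta_invalid_lo: "\<not> valid_lo p x \<Longrightarrow> \<not> lab_delta N p x t"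
  and lab_delta_invalid_up: "\<not> valid_up p t \<Longrightarrow> \<not> lab_delta N p x t"
  by (auto simp: lab_delta_def Tl_def Tu_def)

lemma RGr_intertwines:
  assumes p: "is_tcpart p" and R: "RGr st N p y"
    and x: "x \<in> labs N (length (lo p))" and g: "g \<in> labs N (length (up p))"
  shows "(\<Sum>t\<in>labs N (length (up p)). if lab_delta N p x t then monom st (up p) y t g else 0)
       = (\<Sum>t'\<in>labs N (length (lo p)). if lab_delta N p t' g then monom st (lo p) y x t' else 0)"
    (is "?lhs = ?rhs")
proof -
  have lhs: "?lhs = (\<Sum>t\<in>{t \<in> labs N (length (up p)). lab_delta N p x t}. monom st (up p) y t g)"
    and rhs: "?rhs = (\<Sum>t'\<in>{t' \<in> labs N (length (lo p)). lab_delta N p t' g}. monom st (lo p) y x t')"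
    by (simp_all add: sum.inter_filter finite_labs)
  show ?thesis
  proof (cases "valid_lo p x"; cases "valid_up p g")
    assume "valid_lo p x" "valid_up p g"
    obtain f where f: "f \<in> assigns N p" "x \<in> Tl N p f" using Tl_if_valid_lo p x \<open>valid_lo p x\<close> .
    obtain h where h: "h \<in> assigns N p" "g \<in> Tu N p h" using Tu_if_valid_up p g \<open>valid_up p g\<close> .
    show ?thesis
      unfolding lhs rhs lab_delta_row[OF p f] lab_delta_col[OF p h]
      using R[unfolded RGr_def, THEN conjunct1, rule_format, OF f(1) h f(2)] .
  next
    assume "valid_lo p x" "\<not> valid_up p g"
    obtain f where f: "f \<in> assigns N p" "x \<in> Tl N p f" using Tl_if_valid_lo p x \<open>valid_lo p x\<close> .
    have "g \<in> T0u N p" using g \<open>\<not> valid_up p g\<close> by (simp add: T0u_def)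
    thus ?thesis
      unfolding lhs rhs lab_delta_row[OF p f] using R[unfolded RGr_def, THEN conjunct2, THEN conjunct1, rule_format, OF f(1)]
      by (simp add: lab_delta_invalid_up \<open>\<not> valid_up p g\<close>)
  next
    assume "\<not> valid_lo p x" "valid_up p g"
    obtain h where h: "h \<in> assigns N p" "g \<in> Tu N p h" using Tu_if_valid_up p g \<open>valid_up p g\<close> .
    have "x \<in> T0l N p" using x \<open>\<not> valid_lo p x\<close> by (simp add: T0l_def)
    thus ?thesis
      unfolding lhs rhs lab_delta_col[OF p h] using R[unfolded RGr_def, THEN conjunct2, THEN conjunct2, rule_format, OF h(1)]
      by (simp add: lab_delta_invalid_lo \<open>\<not> valid_lo p x\<close>)
  next
    assume "\<not> valid_lo p x" "\<not> valid_up p g"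
    thus ?thesis unfolding lhs rhs by (simp add: lab_delta_invalid_lo lab_delta_invalid_up)
  qed
qed

lemma RGr_transpose_if_transposed_intertwines:
  assumes p: "is_tcpart p"
    and T: "\<And>r s. r \<in> labs N (length (up p)) \<Longrightarrow> s \<in> labs N (length (lo p)) \<Longrightarrow>
      (\<Sum>x\<in>labs N (length (lo p)). if lab_delta N p x r then monom st (lo p) y x s else 0)
      = (\<Sum>g\<in>labs N (length (up p)). if lab_delta N p s g then monom st (up p) y r g else 0)"
  shows "RGr st N p (\<lambda>i j. y j i)"
proof -
  have T': "(\<Sum>x\<in>{x \<in> labs N (length (lo p)). lab_delta N p x r}. monom st (lo p) y x s)
      = (\<Sum>g\<in>{g \<in> labs N (length (up p)). lab_delta N p s g}. monom st (up p) y r g)"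
    if "r \<in> labs N (length (up p))" "s \<in> labs N (length (lo p))" for r s
    using T[OF that] by (simp add: sum.inter_filter finite_labs)
  show ?thesis
    unfolding RGr_def monom_transpose[where y = y]
  proof (intro conjI ballI)
    fix f g \<gamma> \<gamma>'
    assume f: "f \<in> assigns N p" and g: "g \<in> assigns N p" and \<gamma>: "\<gamma> \<in> Tu N p g" and \<gamma>': "\<gamma>' \<in> Tl N p f"
    show "(\<Sum>t\<in>Tu N p f. monom st (up p) y \<gamma> t) = (\<Sum>t'\<in>Tl N p g. monom st (lo p) y t' \<gamma>')"
      using T'[OF Tu_labs[OF \<gamma>] Tl_labs[OF \<gamma>']]
      unfolding lab_delta_col[OF p g \<gamma>] lab_delta_row[OF p f \<gamma>'] by (rule sym)
  next
    fix f \<gamma> assume f: "f \<in> assigns N p" and \<gamma>: "\<gamma> \<in> T0u N p"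
    obtain s where s: "s \<in> Tl N p f"
      using row_labs_nonempty[OF p f T0u_labels_pos[OF \<gamma>]] by (auto simp: Tl_row_labs)
    have "\<gamma> \<in> labs N (length (up p))" and invalid: "\<not> valid_up p \<gamma>" using \<gamma> by (simp_all add: T0u_def)
    from T'[OF this(1) Tl_labs[OF s]]
    show "(\<Sum>t\<in>Tu N p f. monom st (up p) y \<gamma> t) = 0"
      unfolding lab_delta_row[OF p f s] by (simp add: lab_delta_invalid_up[OF invalid])
  next
    fix g \<gamma>' assume g: "g \<in> assigns N p" and \<gamma>': "\<gamma>' \<in> T0l N p"
    obtain r where r: "r \<in> Tu N p g"
      using row_labs_nonempty[OF p g T0l_labels_pos[OF \<gamma>']] by (auto simp: Tu_row_labs)
    have "\<gamma>' \<in> labs N (length (lo p))" and invalid: "\<not> valid_lo p \<gamma>'" using \<gamma>' by (simp_all add: T0l_def)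
    from T'[OF Tu_labs[OF r] this(1)]
    show "(\<Sum>t'\<in>Tl N p g. monom st (lo p) y t' \<gamma>') = 0"
      unfolding lab_delta_col[OF p g r] by (simp add: lab_delta_invalid_lo[OF invalid])
  qed
qed

lemma RGr_transpose_if_biunitary:
  assumes st: "anti_involution st" and u: "biunitary st N u"
    and p: "is_tcpart p" and R: "RGr st N p u"
  shows "RGr st N p (\<lambda>i j. u j i)"
proof (rule RGr_transpose_if_transposed_intertwines[OF p])
  fix r s assume r: "r \<in> labs N (length (up p))" and s: "s \<in> labs N (length (lo p))"
  show "(\<Sum>x\<in>labs N (length (lo p)). if lab_delta N p x r then monom st (lo p) u x s else 0)
      = (\<Sum>g\<in>labs N (length (up p)). if lab_delta N p s g then monom st (up p) u r g else 0)"
    by (rule intertwiner_transpose[OF st finite_labs finite_labs _ _ _ r s])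
      (rule monom_rows_orthonormal[OF st u] monom_cols_orthonormal[OF st u] RGr_intertwines[OF p R];
        assumption)+
qed

theorem lemma4p10:
  fixes st :: "'a::{real_normed_algebra_1,banach} \<Rightarrow> 'a" and iu :: 'a
    and N :: nat and u :: "nat \<Rightarrow> nat \<Rightarrow> 'a" and p :: tcpart
  assumes G: "cmqg st iu N u TYPE('b::{real_normed_algebra_1,banach})"
    and p: "is_tcpart p"
  shows "((RGr st N p u \<and> RGr st N (pcomp p (pinv p)) u \<and> RGr st N (pinv p) u)
            \<longrightarrow> RSp st N N p u)
       \<and> ((RSp st N N p u \<and> RSp st N N p (\<lambda>i j. u j i)) \<longrightarrow> RGr st N p u)
       \<and> (\<forall>Pis. (\<forall>q\<in>Pis. is_tcpart q) \<and> mixed_pairs \<subseteq> Pis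
                \<and> is_GN st iu N u Pis TYPE('c::{real_normed_algebra_1,banach})
                \<and> p \<in> cat_gen Pis
            \<longrightarrow> (RGr st N p u \<longleftrightarrow> RSp st N N p u \<and> RSp st N N p (\<lambda>i j. u j i)))"
proof (intro conjI impI allI)
  have st: "anti_involution st"
    using G by (simp add: cmqg_def cstar_def anti_involution_def)
  have RSp_iff: "RGr st N p u \<and> RGr st N p (\<lambda>i j. u j i) \<longleftrightarrow> RSp st N N p u \<and> RSp st N N p (\<lambda>i j. u j i)"
    using RSp_if_RGr_and_RGr_transpose[OF p, of st N u] RSp_if_RGr_and_RGr_transpose[OF p, of st N "\<lambda>i j. u j i"]
      RGr_if_RSp_and_RSp_transpose[OF p, of st N u] RGr_if_RSp_and_RSp_transpose[OF p, of st N "\<lambda>i j. u j i"]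
    by auto
  show "RSp st N N p u" if "RGr st N p u \<and> RGr st N (pcomp p (pinv p)) u \<and> RGr st N (pinv p) u"
    using that RGr_pinv_transpose[of st N "pinv p" u] RSp_iff by auto
  show "RGr st N p u" if "RSp st N N p u \<and> RSp st N N p (\<lambda>i j. u j i)"
    using that RSp_iff by blast
  fix Pis
  assume "(\<forall>q\<in>Pis. is_tcpart q) \<and> mixed_pairs \<subseteq> Pis
    \<and> is_GN st iu N u Pis TYPE('c::{real_normed_algebra_1,banach}) \<and> p \<in> cat_gen Pis"
  hence "biunitary st N u"
    using biunitary_if_mixed_pairs[of st N u] by (auto simp: is_GN_def)
  thus "RGr st N p u \<longleftrightarrow> RSp st N N p u \<and> RSp st N N p (\<lambda>i j. u j i)"
    using RGr_transpose_if_biunitary[OF st _ p] RSp_iff by blast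
qed

end
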